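(* Let $G$ be a PMCFG and $\mathcal{M}(G)$ the automaton with respect to $G$. If $G$ is a $k$-MCFG, then $\mathcal{M}(G)$ is $k$-restricted.
   Context: Composition functions. Fix variables $x_i^j$ ($i,j\in\mathbb{N}_+$). For $s_1,\dots,s_\ell,s\in\mathbb{N}_+$ a composition function of sort $(s_1\cdots s_\ell,s)$ over $\Sigma$ is given by a tuple $[u_1,\dots,u_s]$ with each $u_i$ a string over $\Sigma\cup\{x_i^j : i\in[\ell], j\in[s_i]\}$; it maps $((w_1^1,\dots,w_1^{s_1}),\dots,(w_\ell^1,\dots,w_\ell^{s_\ell}))$ to the $s$-tuple obtained from $(u_1,\dots,u_s)$ by replacing each $x_i^j$ by $w_i^j$. Fan-out is $s$; linear means every variable occurs at most once in $u_1\cdots u_s$. PMCFG/MCFG. A PMCFG is $G=(N,\Sigma,I,R)$ with $N$ a finite set of nonterminals each with a sort in $\mathbb{N}_+$, $I$ a set of nonterminals of sort 1, and $R$ a finite set of rules $A\to f(A_1,\dots,A_\ell)$ where $f$ has sort $(s_1\cdots s_\ell,s)$, $A$ has sort $s$, $A_i$ has sort $s_i$. An MCFG has only linear composition functions; a $k$-MCFG is an MCFG with all rules of fan-out at most $k$. Tree stacks and TSA. A tree stack over $\Gamma$ ($@\notin\Gamma$) is $(\xi,\rho)$ with $\xi:\mathbb{N}_+^*\rightharpoonup\Gamma\cup\{@\}$ of finite prefix-closed domain, $\xi(\varepsilon)=@$, labels elsewhere in $\Gamma$, and $\rho\in\mathrm{dom}(\xi)$. Predicates: $\mathrm{bottom}$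 ($\rho=\varepsilon$), $\mathrm{equals}(\gamma)$ ($\xi(\rho)=\gamma$), and "all". Instructions: $\mathrm{id}$; $\mathrm{push}_n(\gamma)$ (defined iff $\rho n\notin\mathrm{dom}(\xi)$, result $(\xi[\rho n\mapsto\gamma],\rho n)$); $\mathrm{up}_n$ (defined iff $\rho n\in\mathrm{dom}(\xi)$, result $(\xi,\rho n)$); $\mathrm{down}$ ($(\xi,\rho n)\mapsto(\xi,\rho)$); $\mathrm{set}(\gamma)$ (defined iff $\rho\ne\varepsilon$, result $(\xi[\rho\mapsto\gamma],\rho)$). Initial tree stack $(\{\varepsilon\mapsto@\},\varepsilon)$. A TSA has finite states, initial state, final states and finitely many transitions $(q,\omega,p,f,q')$ ($\omega\in\Sigma\cup\{\varepsilon\}$); $(q,c,w)\vdash_\tau(q',c',w')$ iff $w=\omega w'$, $c\in p$, $f(c)=c'$ defined. A valid run goes from (initial state, initial tree stack, $w$) to (final state, some tree stack, $\varepsilon$) and recognises $w$. $k$-restricted: for every valid run and every position $\rho$, the number of transitions in the run having a $\mathrm{push}$- or $\mathrm{up}$-instruction after which the stack pointer equals $\rho$ is at most $k$. The automaton $\mathcal{M}(G)$ with respect to a PMCFG $G=(N,\Sigma,I,R)$. Let $\bar R=\{\langle r,i,j\rangle : r=A\to[u_1,\dots,u_s](A_1,\dots,A_\ell)\in R, i\in[s], j\in\{0,\dots,|u_i|\}\}$ and $\Box$ a fresh symbol. Stack alphabet $\Gamma=\{\Box\}\cup R\cup\bar R$; states $Q=\{q,q_+,q_- : q\in\bar R\cup\{\Box\}\}$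 (with $q_+,q_-$ fresh copies); initial state $\Box$; final states $\{\Box\}$. The transition set is the smallest set containing: (i) for every $r=S\to[u](A_1,\dots,A_\ell)\in R$ with $S\in I$: $(\Box,\varepsilon,\text{all},\mathrm{push}_1(\Box),\langle r,1,0\rangle)$, $(\langle r,1,|u|\rangle,\varepsilon,\mathrm{equals}(\Box),\mathrm{set}(r),\Box_-)$, and $(\Box_-,\varepsilon,\text{all},\mathrm{down},\Box)$; (ii) for every $r=A\to[u_1,\dots,u_s](A_1,\dots,A_\ell)\in R$, $i\in[s]$, $j\in[|u_i|]$ such that the $j$-th symbol of $u_i$ is $\sigma\in\Sigma$: $(\langle r,i,j-1\rangle,\sigma,\text{all},\mathrm{id},\langle r,i,j\rangle)$; (iii) for every $r=A\to[u_1,\dots,u_s](A_1,\dots,A_\ell)\in R$, $i\in[s]$, $j\in[|u_i|]$, $\kappa\in[\ell]$, $r'=A_\kappa\to[v_1,\dots,v_{s'}](B_1,\dots,B_{\ell'})\in R$, $m\in[s']$ such that the $j$-th symbol of $u_i$ is $x_\kappa^m$, writing $q=\langle r,i,j\rangle$: $(\langle r,i,j-1\rangle,\varepsilon,\text{all},\mathrm{push}_\kappa(q),\langle r',m,0\rangle)$, $(\langle r,i,j-1\rangle,\varepsilon,\text{all},\mathrm{up}_\kappa,q_+)$, $(q_+,\varepsilon,\mathrm{equals}(r'),\mathrm{set}(q),\langle r',m,0\rangle)$, $(\langle r',m,|v_m|\rangle,\varepsilon,\mathrm{equals}(q),\mathrm{set}(r'),q_-)$, and $(q_-,\varepsilon,\text{all},\mathrm{down},q)$.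 *)

theory Defs
  imports Main
begin

text \<open>Symbols of composition functions: a terminal, or a variable V i j standing for x_i^j
  (indices are 1-based, i,j >= 1).\<close>
datatype 't sym = T 't | V nat nat

text \<open>A rule A -> [u_1,...,u_s](A_1,...,A_l); the components u_1..u_s are the list elements.\<close>
datatype ('n, 't) rule = Rule (lhs: 'n) (comp: "'t sym list list") (rhs: "'n list")

record ('n, 't) pmcfg =
  nts      :: "'n set"
  srt      :: "'n \<Rightarrow> nat"
  terms    :: "'t set"
  initials :: "'n set"
  rules    :: "('n, 't) rule set"

definition is_var :: "'t sym \<Rightarrow> bool" where
  "is_var a = (case a of V _ _ \<Rightarrow> True | T _ \<Rightarrow> False)"

definition is_pmcfg :: "('n, 't) pmcfg \<Rightarrow> bool" where
  "is_pmcfg G \<longleftrightarrow>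
     finite (nts G) \<and> finite (terms G) \<and> finite (rules G) \<and>
     (\<forall>A \<in> nts G. 1 \<le> srt G A) \<and>
     initials G \<subseteq> nts G \<and> (\<forall>S \<in> initials G. srt G S = 1) \<and>
     (\<forall>r \<in> rules G.
        lhs r \<in> nts G \<and> set (rhs r) \<subseteq> nts G \<and>
        length (comp r) = srt G (lhs r) \<and>
        (\<forall>u \<in> set (comp r). \<forall>a \<in> set u.
           (case a of
              T \<sigma> \<Rightarrow> \<sigma> \<in> terms G
            | V i j \<Rightarrow> 1 \<le> i \<and> i \<le> length (rhs r) \<and>
                       1 \<le> j \<and> j \<le> srt G (rhs r ! (i - 1)))))"

definition linear_rule :: "('n, 't) rule \<Rightarrow> bool" where
  "linear_rule r \<longleftrightarrow> distinct (filter is_var (concat (comp r)))"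

text \<open>k-MCFG: an MCFG (all composition functions linear) whose rules have fan-out at most k
  (the fan-out of A -> [u_1,...,u_s](...) being s).\<close>
definition is_kMCFG :: "nat \<Rightarrow> ('n, 't) pmcfg \<Rightarrow> bool" where
  "is_kMCFG k G \<longleftrightarrow> is_pmcfg G \<and>
     (\<forall>r \<in> rules G. linear_rule r \<and> length (comp r) \<le> k)"

datatype 'g lab = At | Lab 'g

type_synonym 'g tstack = "(nat list \<Rightarrow> 'g lab option) \<times> nat list"

datatype 'g pred = Bottom | Equals 'g | All

datatype 'g instr = IdI | Push nat 'g | Up nat | Down | SetI 'g

definition init_ts :: "'g tstack" where
  "init_ts = (Map.empty([] \<mapsto> At), [])"

definition holds :: "'g pred \<Rightarrow> 'g tstack \<Rightarrow> bool" where
  "holds p c = (case p of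
      Bottom \<Rightarrow> snd c = []
    | Equals \<gamma> \<Rightarrow> fst c (snd c) = Some (Lab \<gamma>)
    | All \<Rightarrow> True)"

fun apply_instr :: "'g instr \<Rightarrow> 'g tstack \<Rightarrow> 'g tstack option" where
  "apply_instr IdI (\<xi>, \<rho>) = Some (\<xi>, \<rho>)"
| "apply_instr (Push n \<gamma>) (\<xi>, \<rho>) =
     (if \<rho> @ [n] \<notin> dom \<xi> then Some (\<xi>(\<rho> @ [n] \<mapsto> Lab \<gamma>), \<rho> @ [n]) else None)"
| "apply_instr (Up n) (\<xi>, \<rho>) =
     (if \<rho> @ [n] \<in> dom \<xi> then Some (\<xi>, \<rho> @ [n]) else None)"
| "apply_instr Down (\<xi>, \<rho>) = (if \<rho> \<noteq> [] then Some (\<xi>, butlast \<rho>) else None)"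
| "apply_instr (SetI \<gamma>) (\<xi>, \<rho>) = (if \<rho> \<noteq> [] then Some (\<xi>(\<rho> \<mapsto> Lab \<gamma>), \<rho>) else None)"

definition is_push_or_up :: "'g instr \<Rightarrow> bool" where
  "is_push_or_up f = (case f of Push _ _ \<Rightarrow> True | Up _ \<Rightarrow> True | _ \<Rightarrow> False)"

text \<open>A transition (q, omega, p, f, q'); omega = None stands for epsilon.\<close>
type_synonym ('q, 'a, 'g) transition = "'q \<times> 'a option \<times> 'g pred \<times> 'g instr \<times> 'q"

record ('q, 'a, 'g) tsa =
  states  :: "'q set"
  inp     :: "'a set"
  stk     :: "'g set"
  initial :: "'q"
  finals  :: "'q set"
  trans   :: "('q, 'a, 'g) transition set"

type_synonym ('q, 'a, 'g) config = "'q \<times> 'g tstack \<times> 'a list"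

definition step :: "('q, 'a, 'g) transition \<Rightarrow> ('q, 'a, 'g) config \<Rightarrow> ('q, 'a, 'g) config \<Rightarrow> bool" where
  "step \<tau> C C' \<longleftrightarrow>
     (case \<tau> of (q, \<omega>, p, f, q') \<Rightarrow>
       (case C of (q1, c, w) \<Rightarrow> case C' of (q2, c', w') \<Rightarrow>
          q1 = q \<and> q2 = q' \<and> w = (case \<omega> of None \<Rightarrow> w' | Some a \<Rightarrow> a # w') \<and>
          holds p c \<and> apply_instr f c = Some c'))"

definition valid_run :: "('q, 'a, 'g) tsa \<Rightarrow> ('q, 'a, 'g) transition list \<Rightarrow> ('q, 'a, 'g) config list \<Rightarrow> bool" where
  "valid_run A ts cs \<longleftrightarrow>
     length cs = Suc (length ts) \<and>
     (\<forall>i < length ts. ts ! i \<in> trans A \<and> step (ts ! i) (cs ! i) (cs ! Suc i)) \<and>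
     fst (cs ! 0) = initial A \<and> fst (snd (cs ! 0)) = init_ts \<and>
     fst (last cs) \<in> finals A \<and> snd (snd (last cs)) = []"

definition instr_of :: "('q, 'a, 'g) transition \<Rightarrow> 'g instr" where
  "instr_of \<tau> = fst (snd (snd (snd \<tau>)))"

definition k_restricted :: "nat \<Rightarrow> ('q, 'a, 'g) tsa \<Rightarrow> bool" where
  "k_restricted k A \<longleftrightarrow>
     (\<forall>ts cs. valid_run A ts cs \<longrightarrow>
        (\<forall>\<rho>. card {i. i < length ts \<and> is_push_or_up (instr_of (ts ! i)) \<and>
                       snd (fst (snd (cs ! Suc i))) = \<rho>} \<le> k))"

text \<open>Items <r,i,j> (i 1-based, j 0-based) together with the fresh symbol Box.\<close>
datatype ('n, 't) item = IBox | IR "('n, 't) rule" nat nat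

datatype ('n, 't) gam = GI "('n, 't) item" | GR "('n, 't) rule"

datatype ('n, 't) st = St "('n, 't) item" | StP "('n, 't) item" | StM "('n, 't) item"

definition Rbar :: "('n, 't) pmcfg \<Rightarrow> ('n, 't) item set" where
  "Rbar G = {IR r i j | r i j. r \<in> rules G \<and> 1 \<le> i \<and> i \<le> length (comp r) \<and>
                              j \<le> length (comp r ! (i - 1))}"

inductive_set transM :: "('n, 't) pmcfg \<Rightarrow> (('n, 't) st, 't, ('n, 't) gam) transition set"
  for G :: "('n, 't) pmcfg" where
  init1: "\<lbrakk>r \<in> rules G; r = Rule S [u] As; S \<in> initials G\<rbrakk>
     \<Longrightarrow> (St IBox, None, All, Push 1 (GI IBox), St (IR r 1 0)) \<in> transM G"
| init2: "\<lbrakk>r \<in> rules G; r = Rule S [u] As; S \<in> initials G\<rbrakk>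
     \<Longrightarrow> (St (IR r 1 (length u)), None, Equals (GI IBox), SetI (GR r), StM IBox) \<in> transM G"
| init3: "\<lbrakk>r \<in> rules G; r = Rule S [u] As; S \<in> initials G\<rbrakk>
     \<Longrightarrow> (StM IBox, None, All, Down, St IBox) \<in> transM G"
| read: "\<lbrakk>r \<in> rules G; r = Rule A us As; 1 \<le> i; i \<le> length us; 1 \<le> j;
          j \<le> length (us ! (i - 1)); us ! (i - 1) ! (j - 1) = T \<sigma>\<rbrakk>
     \<Longrightarrow> (St (IR r i (j - 1)), Some \<sigma>, All, IdI, St (IR r i j)) \<in> transM G"
| call_push: "\<lbrakk>r \<in> rules G; r = Rule A us As; 1 \<le> i; i \<le> length us; 1 \<le> j;
          j \<le> length (us ! (i - 1)); 1 \<le> \<kappa>; \<kappa> \<le> length As;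
          r' \<in> rules G; r' = Rule (As ! (\<kappa> - 1)) vs Bs; 1 \<le> m; m \<le> length vs;
          us ! (i - 1) ! (j - 1) = V \<kappa> m\<rbrakk>
     \<Longrightarrow> (St (IR r i (j - 1)), None, All, Push \<kappa> (GI (IR r i j)), St (IR r' m 0)) \<in> transM G"
| call_up: "\<lbrakk>r \<in> rules G; r = Rule A us As; 1 \<le> i; i \<le> length us; 1 \<le> j;
          j \<le> length (us ! (i - 1)); 1 \<le> \<kappa>; \<kappa> \<le> length As;
          r' \<in> rules G; r' = Rule (As ! (\<kappa> - 1)) vs Bs; 1 \<le> m; m \<le> length vs;
          us ! (i - 1) ! (j - 1) = V \<kappa> m\<rbrakk>
     \<Longrightarrow> (St (IR r i (j - 1)), None, All, Up \<kappa>, StP (IR r i j)) \<in> transM G"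
| call_set: "\<lbrakk>r \<in> rules G; r = Rule A us As; 1 \<le> i; i \<le> length us; 1 \<le> j;
          j \<le> length (us ! (i - 1)); 1 \<le> \<kappa>; \<kappa> \<le> length As;
          r' \<in> rules G; r' = Rule (As ! (\<kappa> - 1)) vs Bs; 1 \<le> m; m \<le> length vs;
          us ! (i - 1) ! (j - 1) = V \<kappa> m\<rbrakk>
     \<Longrightarrow> (StP (IR r i j), None, Equals (GR r'), SetI (GI (IR r i j)), St (IR r' m 0)) \<in> transM G"
| ret_set: "\<lbrakk>r \<in> rules G; r = Rule A us As; 1 \<le> i; i \<le> length us; 1 \<le> j;
          j \<le> length (us ! (i - 1)); 1 \<le> \<kappa>; \<kappa> \<le> length As;
          r' \<in> rules G; r' = Rule (As ! (\<kappa> - 1)) vs Bs; 1 \<le> m; m \<le> length vs;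
          us ! (i - 1) ! (j - 1) = V \<kappa> m\<rbrakk>
     \<Longrightarrow> (St (IR r' m (length (vs ! (m - 1)))), None, Equals (GI (IR r i j)), SetI (GR r'),
          StM (IR r i j)) \<in> transM G"
| ret_down: "\<lbrakk>r \<in> rules G; r = Rule A us As; 1 \<le> i; i \<le> length us; 1 \<le> j;
          j \<le> length (us ! (i - 1)); 1 \<le> \<kappa>; \<kappa> \<le> length As;
          r' \<in> rules G; r' = Rule (As ! (\<kappa> - 1)) vs Bs; 1 \<le> m; m \<le> length vs;
          us ! (i - 1) ! (j - 1) = V \<kappa> m\<rbrakk>
     \<Longrightarrow> (StM (IR r i j), None, All, Down, St (IR r i j)) \<in> transM G"

definition MG :: "('n, 't) pmcfg \<Rightarrow> (('n, 't) st, 't, ('n, 't) gam) tsa" where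
  "MG G = \<lparr> states = (\<Union>q \<in> insert IBox (Rbar G). {St q, StP q, StM q}),
            inp = terms G,
            stk = {GI IBox} \<union> GR ` rules G \<union> GI ` Rbar G,
            initial = St IBox,
            finals = {St IBox},
            trans = transM G \<rparr>"

end

theory Submission
  imports Defs "HOL-Library.Sublist"
begin

(*
  Attach ghost data to every position p of the tree stack: the rule whose application p
  stands for, the components of that rule entered at p so far, the symbol positions of the
  rule already passed, and the item currently being worked on at p.  Every push or up that
  moves the pointer to a child p @ [\<kappa>] enters the component m of the child's rule whose
  variable x_\<kappa>^m the rule at p has just passed, so the components entered at p @ [\<kappa>] are
  exactly those called from the passed positions of p.  Each component at p is traversed only
  once, from left to right, and a linear rule contains each variable at most once; hence no
  position of p is passed twice and every push or up to p @ [\<kappa>] enters a new component.  The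
  number of such transitions is thus bounded by the fan-out of a rule, i.e. by k.
*)

lemma distinct_filter_nth_eq:
  assumes "distinct (filter P xs)" "a < length xs" "b < length xs" "xs ! a = xs ! b" "P (xs ! a)"
  shows "a = b"
  using assms
proof (induction xs arbitrary: a b)
  case (Cons x xs)
  then show ?case
    by (cases a; cases b) (auto simp: filter_empty_conv split: if_splits)
qed simp

lemma distinct_filter_concat_nth_eq:
  assumes "distinct (filter P (concat xss))" "i < length xss" "j < length (xss ! i)"
    "i' < length xss" "j' < length (xss ! i')" "xss ! i ! j = xss ! i' ! j'" "P (xss ! i ! j)"
  shows "i = i' \<and> j = j'"
  using assms
proof (induction xss arbitrary: i i')
  case (Cons xs xss)
  have head_tail_disjoint: False
    if "j < length xs" "n < length xss" "l < length (xss ! n)" "xs ! j = xss ! n ! l" "P (xs ! j)"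
    for j n l
  proof -
    have "xs ! j \<in> set (filter P xs)" using that(1,5) by simp
    moreover have "xs ! j \<in> set (filter P (concat xss))"
      using that by (auto intro!: bexI[of _ "xss ! n"])
    ultimately show False using Cons.prems(1) by auto
  qed
  show ?case
  proof (cases i; cases i')
    fix i1 i2 assume "i = Suc i1" "i' = Suc i2"
    then show ?thesis using Cons by auto
  qed (use Cons.prems head_tail_disjoint head_tail_disjoint[OF _ _ _ sym]
         distinct_filter_nth_eq[of P xs j j'] in auto)
qed simp

abbreviation sym_at :: "('n, 't) rule \<Rightarrow> nat \<Rightarrow> nat \<Rightarrow> 't sym" where
  "sym_at r i j \<equiv> comp r ! (i - 1) ! (j - 1)"

definition symbol_pos :: "('n, 't) rule \<Rightarrow> nat \<Rightarrow> nat \<Rightarrow> bool" where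
  "symbol_pos r i j \<longleftrightarrow> 1 \<le> i \<and> i \<le> length (comp r) \<and> 1 \<le> j \<and> j \<le> length (comp r ! (i - 1))"

lemma linear_rule_sym_at_eq:
  assumes "linear_rule r" "symbol_pos r i j" "symbol_pos r i' j'"
    and "sym_at r i j = V \<kappa> m" "sym_at r i' j' = V \<kappa> m"
  shows "i = i' \<and> j = j'"
proof -
  have "i - 1 = i' - 1 \<and> j - 1 = j' - 1"
    using assms distinct_filter_concat_nth_eq[of is_var "comp r" "i - 1" "j - 1" "i' - 1" "j' - 1"]
    by (auto simp: linear_rule_def symbol_pos_def is_var_def)
  then show ?thesis using assms(2,3) by (auto simp: symbol_pos_def)
qed

section \<open>Ghost state\<close>

type_synonym ('n, 't) stack_tree = "nat list \<Rightarrow> ('n, 't) gam lab option"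

text \<open>Pairs (i, j) address the j-th symbol of the component u_i, as in the items IR r i j.
  The cursor of p is the item reached at p while p lies on the path to the stack pointer.\<close>
record ('n, 't) ghost =
  cursor  :: "nat list \<Rightarrow> (nat \<times> nat) option"
  entered :: "nat list \<Rightarrow> nat set"
  passed  :: "nat list \<Rightarrow> (nat \<times> nat) set"
  rule_at :: "nat list \<Rightarrow> ('n, 't) rule"

definition called :: "('n, 't) ghost \<Rightarrow> nat list \<Rightarrow> nat \<Rightarrow> nat set" where
  "called g p \<kappa> = {m. \<exists>(i, j) \<in> passed g p. sym_at (rule_at g p) i j = V \<kappa> m}"

definition return_addr :: "('n, 't) ghost \<Rightarrow> nat list \<Rightarrow> ('n, 't) item \<Rightarrow> bool" where
  "return_addr g p q \<longleftrightarrow> (q = IBox \<and> p = [1]) \<or>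
     (butlast p \<noteq> [] \<and> (\<exists>i j. cursor g (butlast p) = Some (i, j) \<and> q = IR (rule_at g (butlast p)) i j))"

definition state_ok ::
    "('n, 't) ghost \<Rightarrow> ('n, 't) stack_tree \<Rightarrow> nat list \<Rightarrow> ('n, 't) st \<Rightarrow> bool" where
  "state_ok g \<xi> \<rho> s = (case s of
     St IBox \<Rightarrow> \<rho> = []
   | St (IR r i j) \<Rightarrow> \<rho> \<noteq> [] \<and> r = rule_at g \<rho> \<and> cursor g \<rho> = Some (i, j)
   | StP q \<Rightarrow> (\<exists>pp \<kappa> i j m. \<rho> = pp @ [\<kappa>] \<and> pp \<noteq> [] \<and> q = IR (rule_at g pp) i j \<and>
        cursor g pp = Some (i, j) \<and> sym_at (rule_at g pp) i j = V \<kappa> m \<and> cursor g \<rho> = Some (m, 0))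
   | StM q \<Rightarrow> \<rho> \<noteq> [] \<and> \<xi> \<rho> = Some (Lab (GR (rule_at g \<rho>))) \<and> cursor g \<rho> = None \<and>
        return_addr g \<rho> q)"

definition ghost_inv :: "nat \<Rightarrow> ('n, 't) st \<Rightarrow> ('n, 't) stack_tree \<Rightarrow> nat list \<Rightarrow>
    ('n, 't) ghost \<Rightarrow> bool" where
  "ghost_inv k s \<xi> \<rho> g \<longleftrightarrow>
    \<rho> \<in> dom \<xi> \<and>
    (\<forall>p \<in> dom \<xi>. p \<noteq> [] \<longrightarrow> butlast p \<in> dom \<xi>) \<and>
    (\<forall>p. p \<notin> dom \<xi> \<longrightarrow> entered g p = {} \<and> passed g p = {}) \<and>
    (\<forall>p r. p \<noteq> [] \<longrightarrow> \<xi> p = Some (Lab (GR r)) \<longrightarrow> r = rule_at g p) \<and>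
    (\<forall>p q. \<xi> p = Some (Lab (GI q)) \<longrightarrow> p \<noteq> [] \<and> prefix p \<rho> \<and> return_addr g p q) \<and>
    (\<forall>p. entered g p \<subseteq> {1..k}) \<and>
    (\<forall>p \<kappa>. p \<noteq> [] \<longrightarrow> entered g (p @ [\<kappa>]) = called g p \<kappa>) \<and>
    (\<forall>p i j. (i, j) \<in> passed g p \<longrightarrow> symbol_pos (rule_at g p) i j \<and> i \<in> entered g p) \<and>
    (\<forall>p i j. cursor g p = Some (i, j) \<longrightarrow> i \<in> entered g p \<and> (\<forall>j'. (i, j') \<in> passed g p \<longrightarrow> j' \<le> j)) \<and>
    (\<forall>p. cursor g p \<noteq> None \<longrightarrow> p \<noteq> [] \<and> prefix p \<rho>) \<and>
    state_ok g \<xi> \<rho> s"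

lemma ghost_invD:
  assumes "ghost_inv k s \<xi> \<rho> g"
  shows inv_ptr_dom: "\<rho> \<in> dom \<xi>"
    and inv_parent_dom: "p \<in> dom \<xi> \<Longrightarrow> p \<noteq> [] \<Longrightarrow> butlast p \<in> dom \<xi>"
    and inv_outside_dom: "p \<notin> dom \<xi> \<Longrightarrow> entered g p = {} \<and> passed g p = {}"
    and inv_rule_label: "p \<noteq> [] \<Longrightarrow> \<xi> p = Some (Lab (GR r)) \<Longrightarrow> r = rule_at g p"
    and inv_item_label: "\<xi> p = Some (Lab (GI q)) \<Longrightarrow> p \<noteq> [] \<and> prefix p \<rho> \<and> return_addr g p q"
    and inv_entered_le: "entered g p \<subseteq> {1..k}"
    and inv_entered_called: "p \<noteq> [] \<Longrightarrow> entered g (p @ [\<kappa>]) = called g p \<kappa>"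
    and inv_passed: "(i, j) \<in> passed g p \<Longrightarrow> symbol_pos (rule_at g p) i j \<and> i \<in> entered g p"
    and inv_cursor: "cursor g p = Some (i, j) \<Longrightarrow> i \<in> entered g p \<and> (\<forall>j'. (i, j') \<in> passed g p \<longrightarrow> j' \<le> j)"
    and inv_cursor_prefix: "cursor g p \<noteq> None \<Longrightarrow> p \<noteq> [] \<and> prefix p \<rho>"
    and inv_state: "state_ok g \<xi> \<rho> s"
  using assms unfolding ghost_inv_def by simp_all

lemma ghost_invI:
  assumes "\<rho> \<in> dom \<xi>"
    and "\<And>p. p \<in> dom \<xi> \<Longrightarrow> p \<noteq> [] \<Longrightarrow> butlast p \<in> dom \<xi>"
    and "\<And>p. p \<notin> dom \<xi> \<Longrightarrow> entered g p = {} \<and> passed g p = {}"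
    and "\<And>p r. p \<noteq> [] \<Longrightarrow> \<xi> p = Some (Lab (GR r)) \<Longrightarrow> r = rule_at g p"
    and "\<And>p q. \<xi> p = Some (Lab (GI q)) \<Longrightarrow> p \<noteq> [] \<and> prefix p \<rho> \<and> return_addr g p q"
    and "\<And>p. entered g p \<subseteq> {1..k}"
    and "\<And>p \<kappa>. p \<noteq> [] \<Longrightarrow> entered g (p @ [\<kappa>]) = called g p \<kappa>"
    and "\<And>p i j. (i, j) \<in> passed g p \<Longrightarrow> symbol_pos (rule_at g p) i j \<and> i \<in> entered g p"
    and "\<And>p i j. cursor g p = Some (i, j) \<Longrightarrow> i \<in> entered g p \<and> (\<forall>j'. (i, j') \<in> passed g p \<longrightarrow> j' \<le> j)"
    and "\<And>p. cursor g p \<noteq> None \<Longrightarrow> p \<noteq> [] \<and> prefix p \<rho>"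
    and "state_ok g \<xi> \<rho> s"
  shows "ghost_inv k s \<xi> \<rho> g"
  unfolding ghost_inv_def using assms by (intro conjI ballI allI impI) simp_all

definition advance :: "('n, 't) ghost \<Rightarrow> nat list \<Rightarrow> nat \<Rightarrow> nat \<Rightarrow> ('n, 't) ghost" where
  "advance g \<rho> i j = g\<lparr>cursor := (cursor g)(\<rho> \<mapsto> (i, j)), passed := (passed g)(\<rho> := insert (i, j) (passed g \<rho>))\<rparr>"

definition enter :: "('n, 't) ghost \<Rightarrow> nat list \<Rightarrow> nat \<Rightarrow> ('n, 't) ghost" where
  "enter g c m = g\<lparr>cursor := (cursor g)(c \<mapsto> (m, 0)), entered := (entered g)(c := insert m (entered g c))\<rparr>"

definition ghost_init :: "('n, 't) ghost" where
  "ghost_init = \<lparr>cursor = Map.empty, entered = \<lambda>_. {}, passed = \<lambda>_. {}, rule_at = \<lambda>_. undefined\<rparr>"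

lemma called_advance:
  "called (advance g \<rho> i j) p \<kappa> =
     (case sym_at (rule_at g \<rho>) i j of
        V \<kappa>' m \<Rightarrow> if p = \<rho> \<and> \<kappa> = \<kappa>' then insert m (called g p \<kappa>) else called g p \<kappa>
      | T _ \<Rightarrow> called g p \<kappa>)"
  by (auto simp: called_def advance_def split: sym.split)

lemma called_enter [simp]: "called (enter g c m) = called g"
  by (simp add: called_def enter_def fun_eq_iff)

lemma called_cursor_update [simp]: "called (g\<lparr>cursor := c\<rparr>) = called g"
  by (simp add: called_def fun_eq_iff)

lemma entered_advance [simp]: "entered (advance g \<rho> i j) = entered g"
  by (simp add: advance_def)

lemma return_addr_cong:
  assumes "return_addr g p q" "prefix p \<rho>" "p \<noteq> []"
    and "\<And>pp. length pp < length \<rho> \<Longrightarrow> cursor g' pp = cursor g pp \<and> rule_at g' pp = rule_at g pp"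
  shows "return_addr g' p q"
proof -
  have "0 < length p" using assms(3) by simp
  then have "length (butlast p) < length \<rho>"
    using prefix_length_le[OF assms(2)] by (cases p) auto
  then show ?thesis
    using assms(1,4) unfolding return_addr_def by metis
qed

lemma state_ok_cong:
  assumes "state_ok g \<xi> \<rho> s" "\<xi>' \<rho> = \<xi> \<rho>"
    and "\<And>p. length p \<le> length \<rho> \<Longrightarrow> cursor g' p = cursor g p \<and> rule_at g' p = rule_at g p"
  shows "state_ok g' \<xi>' \<rho> s"
proof -
  have "return_addr g' \<rho> q" if "\<rho> \<noteq> []" "return_addr g \<rho> q" for q
    using that(2) prefix_order.refl that(1) by (rule return_addr_cong) (use assms(3) in auto)
  then show ?thesis
    using assms by (auto simp: state_ok_def split: st.split item.split)
qed

section \<open>Preservation of the invariant\<close>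

lemma ghost_inv_init: "ghost_inv k (St IBox) (Map.empty([] \<mapsto> At)) [] ghost_init"
  by (auto simp: ghost_inv_def ghost_init_def state_ok_def called_def)

lemma ghost_inv_push_root:
  assumes inv: "ghost_inv k (St IBox) \<xi> [] g" and free: "[1] \<notin> dom \<xi>" and k: "1 \<le> k"
  shows "ghost_inv k (St (IR r 1 0)) (\<xi>([1] \<mapsto> Lab (GI IBox))) [1]
           (enter (g\<lparr>rule_at := (rule_at g)([1] := r)\<rparr>) [1] 1)"
    (is "ghost_inv k _ ?\<xi> _ ?g")
proof -
  have no_cursor: "cursor g p = None" for p
    using inv_cursor_prefix[OF inv, of p] by (cases "cursor g p") auto
  have no_item: "\<xi> p \<noteq> Some (Lab (GI q))" for p q
    using inv_item_label[OF inv, of p q] by auto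
  have root_empty: "entered g [1] = {}" "passed g [1] = {}"
    using inv_outside_dom[OF inv free] by auto
  have called: "called ?g = called g"
    using root_empty(2) by (auto simp: called_def fun_eq_iff)
  have not_root: "p @ [\<kappa>] \<noteq> [1]" if "p \<noteq> []" for p :: "nat list" and \<kappa>
    using that by (cases p) auto
  show ?thesis
  proof (rule ghost_invI)
    fix p q assume "?\<xi> p = Some (Lab (GI q))"
    then show "p \<noteq> [] \<and> prefix p [1] \<and> return_addr ?g p q"
      using no_item by (auto simp: return_addr_def split: if_splits)
  qed (use ghost_invD[OF inv] no_cursor root_empty called not_root k
       in \<open>auto simp: enter_def state_ok_def split: if_splits\<close>)
qed

lemma ghost_inv_read:
  assumes inv: "ghost_inv k (St (IR r i (j - 1))) \<xi> \<rho> g" and pos: "symbol_pos r i j"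
    and terminal: "sym_at r i j = T \<sigma>"
  shows "ghost_inv k (St (IR r i j)) \<xi> \<rho> (advance g \<rho> i j)"
    (is "ghost_inv k _ \<xi> \<rho> ?g")
proof -
  have st: "\<rho> \<noteq> []" "r = rule_at g \<rho>" "cursor g \<rho> = Some (i, j - 1)"
    using inv_state[OF inv] by (auto simp: state_ok_def)
  have called: "called ?g = called g"
    using terminal st(2) by (simp add: called_advance fun_eq_iff)
  have cursor: "i \<in> entered g \<rho>" "\<And>j'. (i, j') \<in> passed g \<rho> \<Longrightarrow> j' \<le> j"
    using inv_cursor[OF inv st(3)] by auto
  have return_addr: "return_addr ?g p q" if "return_addr g p q" "prefix p \<rho>" "p \<noteq> []" for p q
    using that by (rule return_addr_cong) (auto simp: advance_def)
  show ?thesis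
    using ghost_invD[OF inv] st pos called cursor return_addr
    by (intro ghost_invI) (auto simp: advance_def state_ok_def split: if_splits)
qed

lemma ghost_inv_fresh_component:
  assumes inv: "ghost_inv k (St (IR r i (j - 1))) \<xi> \<rho> g" and pos: "symbol_pos r i j"
    and var: "sym_at r i j = V \<kappa> m" and lin: "linear_rule r"
  shows "m \<notin> entered g (\<rho> @ [\<kappa>])"
proof
  assume "m \<in> entered g (\<rho> @ [\<kappa>])"
  have st: "\<rho> \<noteq> []" "r = rule_at g \<rho>" "cursor g \<rho> = Some (i, j - 1)"
    using inv_state[OF inv] by (auto simp: state_ok_def)
  then obtain i' j' where passed: "(i', j') \<in> passed g \<rho>" and "sym_at r i' j' = V \<kappa> m"
    using \<open>m \<in> entered g (\<rho> @ [\<kappa>])\<close> inv_entered_called[OF inv] by (auto simp: called_def)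
  moreover have "symbol_pos r i' j'" using inv_passed[OF inv passed] st(2) by simp
  ultimately have "(i, j) \<in> passed g \<rho>"
    using linear_rule_sym_at_eq[OF lin pos _ var] by auto
  then have "j \<le> j - 1" using inv_cursor[OF inv st(3)] by simp
  then show False using pos unfolding symbol_pos_def by linarith
qed

lemma ghost_inv_alloc:
  assumes inv: "ghost_inv k s \<xi> \<rho> g" and free: "\<rho> @ [\<kappa>] \<notin> dom \<xi>"
  shows "ghost_inv k s (\<xi>(\<rho> @ [\<kappa>] \<mapsto> Lab (GR r))) \<rho> (g\<lparr>rule_at := (rule_at g)(\<rho> @ [\<kappa>] := r)\<rparr>)"
    (is "ghost_inv k s ?\<xi> \<rho> ?g")
proof -
  let ?c = "\<rho> @ [\<kappa>]"
  have c_empty: "entered g ?c = {}" "passed g ?c = {}"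
    using inv_outside_dom[OF inv free] by auto
  have called: "called ?g = called g"
    using c_empty(2) by (auto simp: called_def fun_eq_iff)
  have return_addr: "return_addr ?g p q" if "return_addr g p q" "prefix p \<rho>" "p \<noteq> []" for p q
    using that by (rule return_addr_cong) auto
  show ?thesis
  proof (rule ghost_invI)
    fix p assume "p \<in> dom ?\<xi>" "p \<noteq> []"
    then show "butlast p \<in> dom ?\<xi>"
      using inv_parent_dom[OF inv, of p] inv_ptr_dom[OF inv] by (auto split: if_splits)
  next
    fix p assume "p \<notin> dom ?\<xi>"
    then show "entered ?g p = {} \<and> passed ?g p = {}"
      using inv_outside_dom[OF inv, of p] by (auto split: if_splits)
  next
    fix p r' assume "p \<noteq> []" "?\<xi> p = Some (Lab (GR r'))"
    then show "r' = rule_at ?g p"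
      using inv_rule_label[OF inv, of p r'] by (auto split: if_splits)
  next
    fix p q assume "?\<xi> p = Some (Lab (GI q))"
    then show "p \<noteq> [] \<and> prefix p \<rho> \<and> return_addr ?g p q"
      using inv_item_label[OF inv, of p q] return_addr by (auto split: if_splits)
  next
    fix p i j assume "(i, j) \<in> passed ?g p"
    then show "symbol_pos (rule_at ?g p) i j \<and> i \<in> entered ?g p"
      using inv_passed[OF inv, of i j p] c_empty by (auto split: if_splits)
  next
    show "state_ok ?g ?\<xi> \<rho> s"
      using inv_state[OF inv] by (rule state_ok_cong) auto
  qed (use ghost_invD[OF inv] called in auto)
qed

lemma ghost_inv_up:
  assumes inv: "ghost_inv k (St (IR r i (j - 1))) \<xi> \<rho> g" and pos: "symbol_pos r i j"
    and var: "sym_at r i j = V \<kappa> m" and child: "\<rho> @ [\<kappa>] \<in> dom \<xi>"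
    and fresh: "m \<notin> entered g (\<rho> @ [\<kappa>])" and m: "1 \<le> m" "m \<le> k"
  shows "ghost_inv k (StP (IR r i j)) \<xi> (\<rho> @ [\<kappa>]) (enter (advance g \<rho> i j) (\<rho> @ [\<kappa>]) m)"
    (is "ghost_inv k _ \<xi> ?c ?g")
proof -
  have st: "\<rho> \<noteq> []" "r = rule_at g \<rho>" "cursor g \<rho> = Some (i, j - 1)"
    using inv_state[OF inv] by (auto simp: state_ok_def)
  have cursor: "i \<in> entered g \<rho>" "\<And>j'. (i, j') \<in> passed g \<rho> \<Longrightarrow> j' \<le> j"
    using inv_cursor[OF inv st(3)] by auto
  have g': "cursor ?g = (cursor g)(\<rho> \<mapsto> (i, j), ?c \<mapsto> (m, 0))"
    "entered ?g = (entered g)(?c := insert m (entered g ?c))"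
    "passed ?g = (passed g)(\<rho> := insert (i, j) (passed g \<rho>))" "rule_at ?g = rule_at g"
    by (simp_all add: enter_def advance_def)
  have called: "called ?g p \<kappa>' = (if p = \<rho> \<and> \<kappa>' = \<kappa> then insert m (called g p \<kappa>') else called g p \<kappa>')"
    for p \<kappa>'
    using var st(2) by (simp add: called_advance)
  show ?thesis
  proof (rule ghost_invI)
    fix p q assume "\<xi> p = Some (Lab (GI q))"
    moreover have "return_addr ?g p q" if "return_addr g p q" "prefix p \<rho>" "p \<noteq> []"
      using that by (rule return_addr_cong) (auto simp: g')
    ultimately show "p \<noteq> [] \<and> prefix p ?c \<and> return_addr ?g p q"
      using inv_item_label[OF inv] by auto
  next
    fix p :: "nat list" and \<kappa>' :: nat assume "p \<noteq> []"
    then show "entered ?g (p @ [\<kappa>']) = called ?g p \<kappa>'"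
      using inv_entered_called[OF inv] called by (auto simp: g')
  next
    fix p i' j' assume "cursor ?g p = Some (i', j')"
    moreover have "(m, j') \<notin> passed g ?c" for j'
      using inv_passed[OF inv] fresh by blast
    ultimately show "i' \<in> entered ?g p \<and> (\<forall>j''. (i', j'') \<in> passed ?g p \<longrightarrow> j'' \<le> j')"
      using inv_cursor[OF inv] cursor by (auto simp: g' split: if_splits)
  next
    show "state_ok ?g \<xi> ?c (StP (IR r i j))"
      using st var by (auto simp: state_ok_def g')
  next
    fix p show "entered ?g p \<subseteq> {1..k}"
      using inv_entered_le[OF inv, of p] m by (auto simp: g')
  next
    fix p i' j' assume "(i', j') \<in> passed ?g p"
    then show "symbol_pos (rule_at ?g p) i' j' \<and> i' \<in> entered ?g p"
      using inv_passed[OF inv, of i' j' p] pos cursor(1) st(2) by (auto simp: g' split: if_splits)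
  qed (use ghost_invD(1-5,10)[OF inv] st(1) child in \<open>auto simp: g' split: if_splits\<close>)
qed

lemma ghost_inv_call:
  assumes inv: "ghost_inv k (StP (IR r i j)) \<xi> \<rho> g" and lab: "\<xi> \<rho> = Some (Lab (GR r'))"
    and var: "sym_at r i j = V \<kappa> m"
  shows "ghost_inv k (St (IR r' m 0)) (\<xi>(\<rho> \<mapsto> Lab (GI (IR r i j)))) \<rho> g"
proof -
  have st: "\<rho> \<noteq> []" "cursor g \<rho> = Some (m, 0)" "r' = rule_at g \<rho>" "return_addr g \<rho> (IR r i j)"
  proof -
    obtain pp \<kappa>' m' where "\<rho> = pp @ [\<kappa>']" "pp \<noteq> []" "r = rule_at g pp"
      "cursor g pp = Some (i, j)" "sym_at r i j = V \<kappa>' m'" "cursor g \<rho> = Some (m', 0)"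
      using inv_state[OF inv] by (auto simp: state_ok_def)
    then show "\<rho> \<noteq> []" "cursor g \<rho> = Some (m, 0)" "r' = rule_at g \<rho>" "return_addr g \<rho> (IR r i j)"
      using var inv_rule_label[OF inv _ lab] by (auto simp: return_addr_def)
  qed
  then show ?thesis
    using ghost_invD(1-10)[OF inv] by (intro ghost_invI) (auto simp: state_ok_def split: if_splits)
qed

text \<open>A push is an allocation of the fresh child, an up into it and the relabelling done by
  the call.\<close>
lemma ghost_inv_push:
  assumes inv: "ghost_inv k (St (IR r i (j - 1))) \<xi> \<rho> g" and pos: "symbol_pos r i j"
    and var: "sym_at r i j = V \<kappa> m" and free: "\<rho> @ [\<kappa>] \<notin> dom \<xi>" and m: "1 \<le> m" "m \<le> k"
  shows "ghost_inv k (St (IR r' m 0)) (\<xi>(\<rho> @ [\<kappa>] \<mapsto> Lab (GI (IR r i j)))) (\<rho> @ [\<kappa>])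
           (enter (advance (g\<lparr>rule_at := (rule_at g)(\<rho> @ [\<kappa>] := r')\<rparr>) \<rho> i j) (\<rho> @ [\<kappa>]) m)"
proof -
  have "m \<notin> entered g (\<rho> @ [\<kappa>])"
    using inv_outside_dom[OF inv free] by simp
  then have "ghost_inv k (StP (IR r i j)) (\<xi>(\<rho> @ [\<kappa>] \<mapsto> Lab (GR r'))) (\<rho> @ [\<kappa>])
      (enter (advance (g\<lparr>rule_at := (rule_at g)(\<rho> @ [\<kappa>] := r')\<rparr>) \<rho> i j) (\<rho> @ [\<kappa>]) m)"
    using ghost_inv_alloc[OF inv free] pos var m by (intro ghost_inv_up) auto
  from ghost_inv_call[OF this _ var] show ?thesis
    by simp
qed

lemma ghost_inv_return:
  assumes inv: "ghost_inv k (St (IR r m j)) \<xi> \<rho> g" and lab: "\<xi> \<rho> = Some (Lab (GI q))"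
  shows "ghost_inv k (StM q) (\<xi>(\<rho> \<mapsto> Lab (GR r))) \<rho> (g\<lparr>cursor := (cursor g)(\<rho> := None)\<rparr>)"
    (is "ghost_inv k _ ?\<xi> \<rho> ?g")
proof -
  have st: "\<rho> \<noteq> []" "r = rule_at g \<rho>"
    using inv_state[OF inv] by (auto simp: state_ok_def)
  have return_addr: "return_addr ?g p q'" if "return_addr g p q'" "prefix p \<rho>" "p \<noteq> []" for p q'
    using that by (rule return_addr_cong) auto
  show ?thesis
    using ghost_invD[OF inv] st return_addr inv_item_label[OF inv lab]
    by (intro ghost_invI) (auto simp: state_ok_def split: if_splits)
qed

lemma ghost_inv_down:
  assumes inv: "ghost_inv k (StM q) \<xi> \<rho> g"
  shows "ghost_inv k (St q) \<xi> (butlast \<rho>) g"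
proof -
  have st: "\<rho> \<noteq> []" "\<xi> \<rho> = Some (Lab (GR (rule_at g \<rho>)))" "cursor g \<rho> = None" "return_addr g \<rho> q"
    using inv_state[OF inv] by (auto simp: state_ok_def)
  have below: "prefix p (butlast \<rho>)" if "prefix p \<rho>" "p \<noteq> \<rho>" for p
    using that st(1) prefix_snoc[of p "butlast \<rho>" "last \<rho>"] by simp
  show ?thesis
  proof (rule ghost_invI)
    show "butlast \<rho> \<in> dom \<xi>"
      using inv_parent_dom[OF inv inv_ptr_dom[OF inv] st(1)] .
  next
    fix p q' assume "\<xi> p = Some (Lab (GI q'))"
    then show "p \<noteq> [] \<and> prefix p (butlast \<rho>) \<and> return_addr g p q'"
      using inv_item_label[OF inv] below st(2) by fastforce
  next
    fix p assume "cursor g p \<noteq> None"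
    then show "p \<noteq> [] \<and> prefix p (butlast \<rho>)"
      using inv_cursor_prefix[OF inv] below st(3) by fastforce
  next
    show "state_ok g \<xi> (butlast \<rho>) (St q)"
      using st(4) by (auto simp: state_ok_def return_addr_def)
  qed (use ghost_invD(2-9)[OF inv] in auto)
qed

lemma kMCFG_rule:
  assumes "is_kMCFG k G" "r \<in> rules G"
  shows "linear_rule r" "length (comp r) \<le> k"
  using assms by (auto simp: is_kMCFG_def)

definition enters :: "('n, 't) ghost \<Rightarrow> ('n, 't) ghost \<Rightarrow> nat list \<Rightarrow> bool" where
  "enters g g' c \<longleftrightarrow> (\<exists>m. m \<notin> entered g c \<and> entered g' = (entered g)(c := insert m (entered g c)))"

lemma enters_enter: "m \<notin> entered g c \<Longrightarrow> entered g0 = entered g \<Longrightarrow> enters g (enter g0 c m) c"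
  by (auto simp: enters_def enter_def)

lemma ghost_inv_step_push_up:
  assumes G: "is_kMCFG k G" and inv: "ghost_inv k s \<xi> \<rho> g" and \<tau>: "(q, \<omega>, pr, f, q') \<in> transM G"
    and step: "step (q, \<omega>, pr, f, q') (s, (\<xi>, \<rho>), w) (s', (\<xi>', \<rho>'), w')" and push_up: "is_push_or_up f"
  shows "\<exists>g'. ghost_inv k s' \<xi>' \<rho>' g' \<and> enters g g' \<rho>'"
  using \<tau>
proof cases
  case (init1 r S u As)
  then have tr: "s = St IBox" "s' = St (IR r 1 0)" "\<rho> @ [1] \<notin> dom \<xi>"
    "\<xi>' = \<xi>(\<rho> @ [1] \<mapsto> Lab (GI IBox))" "\<rho>' = \<rho> @ [1]"
    using step by (auto simp: step_def holds_def split: if_splits)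
  moreover have "\<rho> = []" using inv_state[OF inv] tr(1) by (simp add: state_ok_def)
  moreover have "1 \<le> k" using kMCFG_rule(2)[OF G \<open>r \<in> rules G\<close>] \<open>r = Rule S [u] As\<close> by simp
  ultimately show ?thesis
    using ghost_inv_push_root[of k \<xi> g r] inv inv_outside_dom[OF inv] enters_enter[of 1 g]
    by fastforce
next
  case (call_push r A us As i j \<kappa> r' vs Bs m)
  let ?g' = "enter (advance (g\<lparr>rule_at := (rule_at g)(\<rho> @ [\<kappa>] := r')\<rparr>) \<rho> i j) (\<rho> @ [\<kappa>]) m"
  have tr: "s = St (IR r i (j - 1))" "s' = St (IR r' m 0)" "\<rho> @ [\<kappa>] \<notin> dom \<xi>"
    "\<xi>' = \<xi>(\<rho> @ [\<kappa>] \<mapsto> Lab (GI (IR r i j)))" "\<rho>' = \<rho> @ [\<kappa>]"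
    using step call_push by (auto simp: step_def holds_def split: if_splits)
  have "symbol_pos r i j" "sym_at r i j = V \<kappa> m" "1 \<le> m" "m \<le> k"
    using call_push kMCFG_rule(2)[OF G \<open>r' \<in> rules G\<close>] by (auto simp: symbol_pos_def)
  with inv tr have "ghost_inv k s' \<xi>' \<rho>' ?g'"
    using ghost_inv_push by blast
  moreover have "enters g ?g' \<rho>'"
    using inv_outside_dom[OF inv tr(3)] tr(5) by (auto intro: enters_enter)
  ultimately show ?thesis by blast
next
  case (call_up r A us As i j \<kappa> r' vs Bs m)
  let ?c = "\<rho> @ [\<kappa>]"
  have tr: "s = St (IR r i (j - 1))" "s' = StP (IR r i j)" "?c \<in> dom \<xi>" "\<xi>' = \<xi>" "\<rho>' = ?c"
    using step call_up by (auto simp: step_def holds_def split: if_splits)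
  have pos: "symbol_pos r i j" and var: "sym_at r i j = V \<kappa> m" and "1 \<le> m" "m \<le> k"
    using call_up kMCFG_rule(2)[OF G \<open>r' \<in> rules G\<close>] by (auto simp: symbol_pos_def)
  moreover have fresh: "m \<notin> entered g ?c"
    using ghost_inv_fresh_component[OF _ pos var kMCFG_rule(1)[OF G \<open>r \<in> rules G\<close>]] inv tr(1) by simp
  ultimately show ?thesis
    using ghost_inv_up[OF _ pos var] inv tr enters_enter[OF fresh] by fastforce
qed (use push_up in \<open>simp_all add: is_push_or_up_def\<close>)

lemma ghost_inv_step_other:
  assumes inv: "ghost_inv k s \<xi> \<rho> g" and \<tau>: "(q, \<omega>, pr, f, q') \<in> transM G"
    and step: "step (q, \<omega>, pr, f, q') (s, (\<xi>, \<rho>), w) (s', (\<xi>', \<rho>'), w')" and other: "\<not> is_push_or_up f"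
  shows "\<exists>g'. ghost_inv k s' \<xi>' \<rho>' g' \<and> entered g' = entered g"
  using \<tau>
proof cases
  case (init2 r S u As)
  then show ?thesis
    using step inv ghost_inv_return by (fastforce simp: step_def holds_def split: if_splits)
next
  case (init3 r S u As)
  then show ?thesis
    using step inv ghost_inv_down by (fastforce simp: step_def holds_def split: if_splits)
next
  case (read r A us As i j \<sigma>)
  then have "symbol_pos r i j" by (simp add: symbol_pos_def)
  then show ?thesis
    using read step inv ghost_inv_read by (fastforce simp: step_def holds_def)
next
  case (call_set r A us As i j \<kappa> r' vs Bs m)
  then show ?thesis
    using step inv ghost_inv_call by (fastforce simp: step_def holds_def split: if_splits)
next
  case (ret_set r A us As i j \<kappa> r' vs Bs m)
  then show ?thesis
    using step inv ghost_inv_return by (fastforce simp: step_def holds_def split: if_splits)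
next
  case (ret_down r A us As i j \<kappa> r' vs Bs m)
  then show ?thesis
    using step inv ghost_inv_down by (fastforce simp: step_def holds_def split: if_splits)
qed (use other in \<open>simp_all add: is_push_or_up_def\<close>)

lemma ghost_inv_step:
  assumes G: "is_kMCFG k G" and inv: "ghost_inv k s \<xi> \<rho> g" and \<tau>: "\<tau> \<in> transM G"
    and step: "step \<tau> (s, (\<xi>, \<rho>), w) (s', (\<xi>', \<rho>'), w')"
  shows "\<exists>g'. ghost_inv k s' \<xi>' \<rho>' g' \<and>
    (\<forall>p. card (entered g' p) = card (entered g p) + (if is_push_or_up (instr_of \<tau>) \<and> p = \<rho>' then 1 else 0))"
proof -
  obtain q \<omega> pr f q' where \<tau>_def: "\<tau> = (q, \<omega>, pr, f, q')"
    using prod_cases5 by blast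
  note \<tau> = \<tau>[unfolded \<tau>_def] and step = step[unfolded \<tau>_def]
  show ?thesis
  proof (cases "is_push_or_up f")
    case True
    then obtain g' where "ghost_inv k s' \<xi>' \<rho>' g'" "enters g g' \<rho>'"
      using ghost_inv_step_push_up[OF G inv \<tau> step] by blast
    moreover have "finite (entered g \<rho>')"
      using inv_entered_le[OF inv] finite_subset by blast
    ultimately show ?thesis
      using True by (auto simp: enters_def instr_of_def \<tau>_def)
  next
    case False
    then show ?thesis
      using ghost_inv_step_other[OF inv \<tau> step] by (auto simp: instr_of_def \<tau>_def)
  qed
qed

lemma card_Collect_less_Suc:
  "card {i. i < Suc n \<and> P i} = card {i. i < n \<and> P i} + (if P n then 1 else 0)"
proof (cases "P n")
  case True
  then have "{i. i < Suc n \<and> P i} = insert n {i. i < n \<and> P i}" by (auto simp: less_Suc_eq)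
  then show ?thesis using True by simp
next
  case False
  then have "{i. i < Suc n \<and> P i} = {i. i < n \<and> P i}" by (auto simp: less_Suc_eq)
  then show ?thesis using False by simp
qed

lemma run_ghost_inv:
  assumes G: "is_kMCFG k G" and run: "valid_run (MG G) ts cs" and n: "n \<le> length ts"
  shows "\<exists>g. (case cs ! n of (s, (\<xi>, \<rho>), _) \<Rightarrow> ghost_inv k s \<xi> \<rho> g) \<and>
    (\<forall>\<rho>. card {i. i < n \<and> is_push_or_up (instr_of (ts ! i)) \<and> snd (fst (snd (cs ! Suc i))) = \<rho>} =
          card (entered g \<rho>))"
  using n
proof (induction n)
  case 0
  have "fst (cs ! 0) = St IBox" "fst (snd (cs ! 0)) = init_ts"
    using run by (simp_all add: valid_run_def MG_def)
  then show ?case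
    using ghost_inv_init by (intro exI[of _ ghost_init]) (auto simp: init_ts_def ghost_init_def split: prod.split)
next
  case (Suc n)
  obtain s \<xi> \<rho> w where C: "cs ! n = (s, (\<xi>, \<rho>), w)" by (cases "cs ! n") auto
  obtain s' \<xi>' \<rho>' w' where C': "cs ! Suc n = (s', (\<xi>', \<rho>'), w')" by (cases "cs ! Suc n") auto
  from Suc obtain g where inv: "ghost_inv k s \<xi> \<rho> g" and count:
    "\<And>p. card {i. i < n \<and> is_push_or_up (instr_of (ts ! i)) \<and> snd (fst (snd (cs ! Suc i))) = p} =
      card (entered g p)"
    using C by auto
  have "ts ! n \<in> transM G \<and> step (ts ! n) (cs ! n) (cs ! Suc n)"
    using run Suc.prems by (simp add: valid_run_def MG_def Suc_le_eq)
  then have "ts ! n \<in> transM G" "step (ts ! n) (s, (\<xi>, \<rho>), w) (s', (\<xi>', \<rho>'), w')"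
    using C C' by simp_all
  then obtain g' where "ghost_inv k s' \<xi>' \<rho>' g'" and "\<forall>p. card (entered g' p) =
      card (entered g p) + (if is_push_or_up (instr_of (ts ! n)) \<and> p = \<rho>' then 1 else 0)"
    using ghost_inv_step[OF G inv] by blast
  then show ?case
    using count C' by (intro exI[of _ g']) (auto simp: card_Collect_less_Suc)
qed

text \<open>The hypothesis is_pmcfg G is part of is_kMCFG k G.\<close>
theorem mainTheorem4:
  fixes G :: "('n, 't) pmcfg" and k :: nat
  assumes "is_pmcfg G" and "is_kMCFG k G"
  shows "k_restricted k (MG G)"
  unfolding k_restricted_def
proof (intro allI impI)
  fix ts cs \<rho> assume run: "valid_run (MG G) ts cs"
  obtain s \<xi> \<rho>' w where C: "cs ! length ts = (s, (\<xi>, \<rho>'), w)"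
    by (cases "cs ! length ts") auto
  obtain g where inv: "ghost_inv k s \<xi> \<rho>' g"
    and count: "\<forall>p. card {i. i < length ts \<and> is_push_or_up (instr_of (ts ! i)) \<and>
      snd (fst (snd (cs ! Suc i))) = p} = card (entered g p)"
    using run_ghost_inv[OF assms(2) run order_refl] C by auto
  have "card (entered g \<rho>) \<le> card {1..k}"
    using inv_entered_le[OF inv] by (rule card_mono[rotated]) simp
  then show "card {i. i < length ts \<and> is_push_or_up (instr_of (ts ! i)) \<and>
      snd (fst (snd (cs ! Suc i))) = \<rho>} \<le> k"
    using count by simp
qed

end
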